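(* For every $n\in\mathbb{N}$, \[ \sum_{k=1}^{n+1}\frac{2^k}{k}=\frac{n+2}{2}\,{}_3F_2\!\left(1,1,n+3;\,2,2;\,\tfrac12\right)+H_{n+1}-\log 2. \]
   Context: Pochhammer symbol: $(\alpha)_0=1$, $(\alpha)_k=\alpha(\alpha+1)\cdots(\alpha+k-1)$. ${}_3F_2(a,b,c;d,e;z)=\sum_{k\ge0}\frac{(a)_k(b)_k(c)_k}{(d)_k(e)_k}\frac{z^k}{k!}$. $H_n=\sum_{k=1}^{n}\frac1k$. *)

theory Defs
  imports "HOL-Analysis.Analysis"
begin

definition hyp3F2 :: "real \<Rightarrow> real \<Rightarrow> real \<Rightarrow> real \<Rightarrow> real \<Rightarrow> real \<Rightarrow> real" where
  "hyp3F2 a b c d e z =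
     (\<Sum>k. pochhammer a k * pochhammer b k * pochhammer c k
            / (pochhammer d k * pochhammer e k) * z ^ k / fact k)"

definition harm :: "nat \<Rightarrow> real" where
  "harm n = (\<Sum>k=1..n. 1 / real k)"

end

theory Submission
  imports Defs
begin

text \<open>Let G(a) = \<open>\<Sum>\<close>_{k \<ge> 1} (a)_k x^k / (k! k). The identity (a+1)_k / k = (a)_k / k + (a)_k / a
  and the binomial series \<open>\<Sum>\<close>_k (a)_k x^k / k! = (1-x)^(-a) give G(a+1) = G(a) + ((1-x)^(-a) - 1)/a,
  and G(1) = -ln(1-x); hence G(m+1) = \<open>\<Sum>\<close>_{k=1..m} ((1-x)^(-k) - 1)/k - ln(1-x).
  Term by term, 3F2(1,1,c+1;2,2;x) = G(c)/(c x); take x = 1/2 and c = n+2.\<close>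

lemma pochhammer_binomial_series:
  fixes a x :: real
  assumes "\<bar>x\<bar> < 1"
  shows "(\<lambda>j. pochhammer a j / fact j * x ^ j) sums (1 - x) powr (- a)"
proof -
  have "((- a) gchoose j) * (- x) ^ j = pochhammer a j / fact j * x ^ j" for j
  proof -
    have "((- a) gchoose j) * (- x) ^ j = ((-1) ^ j * (- x) ^ j) * pochhammer a j / fact j"
      by (simp add: gbinomial_pochhammer)
    also have "(-1::real) ^ j * (- x) ^ j = x ^ j"
      by (simp flip: power_mult_distrib)
    finally show ?thesis by simp
  qed
  with gen_binomial_real[of "- x" "- a"] assms show ?thesis
    by simp
qed

lemma log_series:
  fixes x :: real
  assumes "\<bar>x\<bar> < 1"
  shows "(\<lambda>k. x ^ Suc k / real (Suc k)) sums - ln (1 - x)"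
proof -
  have "(\<lambda>k. - ((- (- x)) ^ k) / real k) sums ln (1 + - x)"
    using ln_series'[of "- x"] assms by simp
  then have "(\<lambda>k. x ^ k / real k) sums - ln (1 - x)"
    using sums_minus by fastforce
  then show ?thesis
    using sums_Suc_iff[of "\<lambda>k. x ^ k / real k"] by simp
qed

text \<open>Term number \<open>k\<close> is the term of index \<open>k+1\<close> of \<open>G(a)\<close>.\<close>

definition log_binomial_term :: "real \<Rightarrow> real \<Rightarrow> nat \<Rightarrow> real" where
  "log_binomial_term a x k = pochhammer a (Suc k) / (fact (Suc k) * real (Suc k)) * x ^ Suc k"

lemma log_binomial_term_1: "log_binomial_term 1 x k = x ^ Suc k / real (Suc k)"
  by (simp add: log_binomial_term_def flip: pochhammer_fact)

lemma log_binomial_term_plus_1: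
  assumes "a \<noteq> 0"
  shows "log_binomial_term (a + 1) x k =
           log_binomial_term a x k + pochhammer a (Suc k) / fact (Suc k) * x ^ Suc k / a"
proof -
  have "a * pochhammer (a + 1) (Suc k) = (a + real (Suc k)) * pochhammer a (Suc k)"
    by (metis pochhammer_rec pochhammer_rec')
  then have shift: "pochhammer (a + 1) (Suc k) = (a + real (Suc k)) * pochhammer a (Suc k) / a"
    using assms by (simp add: field_simps)
  have "(a + K) * p / a / (F * K) * y = p / (F * K) * y + p / F * y / a"
    if "F \<noteq> 0" "K \<noteq> 0" for F K p y :: real
    using that assms by (simp add: field_simps)
  then show ?thesis
    unfolding log_binomial_term_def shift by simp
qed

lemma sums_log_binomial_term_plus_1:
  assumes "\<bar>x\<bar> < 1" "a \<noteq> 0" "log_binomial_term a x sums s"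
  shows "log_binomial_term (a + 1) x sums (s + ((1 - x) powr (- a) - 1) / a)"
proof -
  have binomial_tail:
    "(\<lambda>k. pochhammer a (Suc k) / fact (Suc k) * x ^ Suc k) sums ((1 - x) powr (- a) - 1)"
    using sums_Suc_iff[of "\<lambda>j. pochhammer a j / fact j * x ^ j"]
      pochhammer_binomial_series[OF assms(1)] by simp
  have "log_binomial_term (a + 1) x =
          (\<lambda>k. log_binomial_term a x k + pochhammer a (Suc k) / fact (Suc k) * x ^ Suc k / a)"
    by (rule ext) (rule log_binomial_term_plus_1[OF assms(2)])
  then show ?thesis
    by (simp only:) (intro sums_add assms(3) sums_divide binomial_tail)
qed

lemma sums_log_binomial_term_nat:
  fixes x :: real
  assumes "\<bar>x\<bar> < 1"
  shows "log_binomial_term (real (Suc m)) x sums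
           ((\<Sum>k=1..m. ((1 - x) powr (- real k) - 1) / real k) - ln (1 - x))"
proof (induction m)
  case 0
  show ?case
    using log_series[OF assms] by (simp add: log_binomial_term_1)
next
  case (Suc m)
  from sums_log_binomial_term_plus_1[OF assms _ Suc.IH] show ?case
    by (simp add: add.commute add_diff_eq)
qed

lemma hyp3F2_1_1_2_2:
  assumes "c \<noteq> 0" "x \<noteq> 0" "log_binomial_term c x sums s"
  shows "hyp3F2 1 1 (c + 1) 2 2 x = s / (c * x)"
proof -
  have "pochhammer 1 k * pochhammer 1 k * pochhammer (c + 1) k
          / (pochhammer 2 k * pochhammer 2 k) * x ^ k / fact k
        = log_binomial_term c x k / (c * x)" for k
  proof -
    have "pochhammer (2::real) k = fact (Suc k)"
      using pochhammer_rec[of "1::real" k] by (simp flip: pochhammer_fact)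
    moreover have "pochhammer (c + 1) k = pochhammer c (Suc k) / c"
      using assms(1) by (simp add: pochhammer_rec)
    moreover have "F * F * (P / c) / ((K * F) * (K * F)) * y / F = P / ((K * F) * K) * (x * y) / (c * x)"
      if "F \<noteq> 0" "K \<noteq> 0" for F K P y :: real
      using that assms(1,2) by (simp add: field_simps)
    ultimately show ?thesis
      unfolding log_binomial_term_def pochhammer_fact[symmetric] fact_Suc power_Suc by simp
  qed
  with sums_divide[OF assms(3), of "c * x"] show ?thesis
    unfolding hyp3F2_def by (simp add: sums_iff)
qed

theorem mainTheorem15:
  fixes n :: nat
  shows "(\<Sum>k=1..n+1. 2 ^ k / real k) =
         (real n + 2) / 2 * hyp3F2 1 1 (real n + 3) 2 2 (1/2) + harm (n+1) - ln 2"
proof -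
  define s where "s = (\<Sum>k=1..n+1. 2 ^ k / real k) - harm (n+1) + ln 2"
  have "(1 - 1/2::real) powr (- real k) = 2 ^ k" for k
    by (simp add: powr_minus powr_realpow power_one_over)
  then have "(\<Sum>k=1..n+1. ((1 - 1/2::real) powr (- real k) - 1) / real k) - ln (1 - 1/2) = s"
    by (simp add: s_def harm_def diff_divide_distrib sum_subtractf ln_div)
  then have "log_binomial_term (real n + 2) (1/2) sums s"
    using sums_log_binomial_term_nat[of "1/2" "Suc n"] by (simp add: add.commute)
  from hyp3F2_1_1_2_2[OF _ _ this]
  have "hyp3F2 1 1 (real n + 3) 2 2 (1/2) = s / ((real n + 2) / 2)"
    by (simp add: add.commute)
  then have "(real n + 2) / 2 * hyp3F2 1 1 (real n + 3) 2 2 (1/2) = s"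
    by simp
  then show ?thesis
    unfolding s_def by linarith
qed

end
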